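(* Let $S$ be a monoid, and let $G$ be the union of all sets $E$ with $1\in E\subseteq E(S)$ such that $S$ is $E$-protomodal. Then $S$ is $G$-protomodal, and $H\subseteq G$ for every $H$ with $1\in H\subseteq E(S)$ such that $S$ is $H$-protomodal. If $E'$ is maximal right pre-reduced in $G$, then $S$ is a modal left $E'$-monoid; $E'$ is largest possible in the sense that whenever $S$ is a modal left $E$-monoid there is an injective map $e\mapsto e'$ from $E$ into $E'$ with $e\sim_r e'$ for all $e\in E$; and $S$ is in fact an inductive left $E'$-monoid.
   Context: For a semigroup $S$, $E(S)$ is its set of idempotents and $Se=\{ue\mid u\in S\}$; for $e,f\in E(S)$, $e\le_r f$ iff $e=ef$, and $e\sim_r f$ iff $e\le_r f$ and $f\le_r e$. $E\subseteq E(S)$ is right pre-reduced if $e=ef$ and $f=fe$ imply $e=f$ for $e,f\in E$. For $F\subseteq E(S)$, $E$ is maximal right pre-reduced in $F$ if $E\subseteq F$, $E$ is right pre-reduced, and every element of $F$ is $\sim_r$-related to an element of $E$. For $s,t\in S$, $Eq(s,t)=\{u\in S\mid us=ut\}$. For a monoid $S$ and $1\in F\subseteq E(S)$, $S$ is $F$-protomodal if for every $e\in F$ and $s\in S$, $Eq(s,se)$ is non-empty and equals $Sf$ for some $f\in F$. Let $1\in E\subseteq E(S)$. $S$ is a modal left $E$-monoid if $E$ is right pre-reduced and (I1') for all $t\in S$, $e\in E$ there is $t\cdot e\in E$ such that for all $s\in S$: $ste=st$ iff $s(t\cdot e)=s$. $S$ is an inductive left $E$-monoid if it is a modal left $E$-monoid,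 $(E,\le_r)$ is a meet-semilattice with meet $\wedge$, and (I2') for $s\in S$, $e,f\in E$: $se=sf=s$ implies $s(e\wedge f)=s$. *)

theory Defs
  imports Main
begin

text \<open>The monoid S is the whole carrier of a type of class monoid_mult (not assumed commutative).\<close>

definition idems :: "'a::monoid_mult set" where
  "idems = {e. e * e = e}"

definition le_r :: "'a::monoid_mult \<Rightarrow> 'a \<Rightarrow> bool" where
  "le_r e f \<longleftrightarrow> e = e * f"

definition sim_r :: "'a::monoid_mult \<Rightarrow> 'a \<Rightarrow> bool" where
  "sim_r e f \<longleftrightarrow> le_r e f \<and> le_r f e"

definition right_pre_reduced :: "'a::monoid_mult set \<Rightarrow> bool" where
  "right_pre_reduced E \<longleftrightarrow> E \<subseteq> idems \<and>
     (\<forall>e\<in>E. \<forall>f\<in>E. e = e * f \<and> f = f * e \<longrightarrow> e = f)"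

definition max_right_pre_reduced_in :: "'a::monoid_mult set \<Rightarrow> 'a set \<Rightarrow> bool" where
  "max_right_pre_reduced_in E F \<longleftrightarrow> F \<subseteq> idems \<and> E \<subseteq> F \<and> right_pre_reduced E \<and>
     (\<forall>f\<in>F. \<exists>e\<in>E. sim_r f e)"

definition Eq :: "'a::monoid_mult \<Rightarrow> 'a \<Rightarrow> 'a set" where
  "Eq s t = {u. u * s = u * t}"

definition protomodal :: "'a::monoid_mult set \<Rightarrow> bool" where
  "protomodal F \<longleftrightarrow> 1 \<in> F \<and> F \<subseteq> idems \<and>
     (\<forall>e\<in>F. \<forall>s. Eq s (s * e) \<noteq> {} \<and> (\<exists>f\<in>F. Eq s (s * e) = {u * f | u. True}))"

definition modal_left :: "'a::monoid_mult set \<Rightarrow> bool" where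
  "modal_left E \<longleftrightarrow> 1 \<in> E \<and> E \<subseteq> idems \<and> right_pre_reduced E \<and>
     (\<forall>t. \<forall>e\<in>E. \<exists>d\<in>E. \<forall>s. s * t * e = s * t \<longleftrightarrow> s * d = s)"

definition inductive_left :: "'a::monoid_mult set \<Rightarrow> bool" where
  "inductive_left E \<longleftrightarrow> modal_left E \<and>
     (\<exists>meet. (\<forall>e\<in>E. \<forall>f\<in>E. meet e f \<in> E \<and> le_r (meet e f) e \<and> le_r (meet e f) f \<and>
                 (\<forall>g\<in>E. le_r g e \<and> le_r g f \<longrightarrow> le_r g (meet e f))) \<and>
            (\<forall>s. \<forall>e\<in>E. \<forall>f\<in>E. s * e = s \<and> s * f = s \<longrightarrow> s * meet e f = s))"

end

theory Submission
  imports Defs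
begin

text \<open>For an idempotent f the left ideal S f is the set of u with u * f = u, and
  Eq s (s * e) is the set of u with u * s * e = u * s; so protomodality of F is
  condition (I1') for F, and modality is protomodality plus pre-reducedness.
  Protomodality is preserved by unions and by adjoining idempotents generating the
  intersection of two such left ideals, so the largest protomodal set G exists and
  is closed under these meets. Since \<open>\<sim>\<^sub>r\<close>-related idempotents generate the same
  left ideal, a transversal E' of G inherits (I1') and the meets, and every modal E,
  being protomodal and pre-reduced, embeds into it.\<close>

definition right_modal :: "'a::monoid_mult set \<Rightarrow> bool" where
  "right_modal F \<longleftrightarrow> (\<forall>t. \<forall>e\<in>F. \<exists>d\<in>F. \<forall>s. s * t * e = s * t \<longleftrightarrow> s * d = s)"

lemma left_ideal_idem_eq:
  assumes "e \<in> idems"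
  shows "{u * e | u. True} = {u. u * e = u}"
proof -
  have "e * e = e" using assms unfolding idems_def by simp
  then have "u * e * e = u * e" for u by (simp add: mult.assoc)
  then show ?thesis by (auto intro: exI) metis
qed

lemma Eq_right_mult: "Eq s (s * e) = {u. u * s * e = u * s}"
  unfolding Eq_def by (auto simp: mult.assoc)

lemma protomodal_iff_right_modal:
  "protomodal F \<longleftrightarrow> 1 \<in> F \<and> F \<subseteq> idems \<and> right_modal F"
proof -
  have Eq_eq: "Eq s (s * e) = {u * f | u. True} \<longleftrightarrow> (\<forall>u. u * s * e = u * s \<longleftrightarrow> u * f = u)"
    if "f \<in> idems" for s e f :: 'a
    using left_ideal_idem_eq[OF that] by (auto simp: Eq_right_mult)
  have "(\<exists>f\<in>F. Eq s (s * e) = {u * f | u. True}) \<longleftrightarrow> (\<exists>d\<in>F. \<forall>u. u * s * e = u * s \<longleftrightarrow> u * d = u)"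
    if "F \<subseteq> idems" for s e
    using Eq_eq that by blast
  moreover have "Eq s (s * e) \<noteq> {}" if "Eq s (s * e) = {u * f | u. True}" for s e f :: 'a
    using that by auto
  ultimately show ?thesis
    unfolding protomodal_def right_modal_def by blast
qed

lemma modal_left_iff_protomodal:
  "modal_left E \<longleftrightarrow> protomodal E \<and> right_pre_reduced E"
  unfolding modal_left_def protomodal_iff_right_modal right_modal_def
  using right_pre_reduced_def by blast

lemma protomodal_Union:
  assumes "\<F> \<noteq> {}" and "\<And>E. E \<in> \<F> \<Longrightarrow> protomodal E"
  shows "protomodal (\<Union>\<F>)"
proof -
  have "right_modal (\<Union>\<F>)"
    unfolding right_modal_def
  proof (intro allI ballI)
    fix t e assume "e \<in> \<Union>\<F>"
    then obtain E where "E \<in> \<F>" "e \<in> E" by blast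
    then obtain d where "d \<in> E" "\<forall>s. s * t * e = s * t \<longleftrightarrow> s * d = s"
      using assms(2) unfolding protomodal_iff_right_modal right_modal_def by blast
    then show "\<exists>d\<in>\<Union>\<F>. \<forall>s. s * t * e = s * t \<longleftrightarrow> s * d = s"
      using \<open>E \<in> \<F>\<close> by blast
  qed
  then show ?thesis
    using assms unfolding protomodal_iff_right_modal by blast
qed

text \<open>The witness is g * d, where u * d = u says u * a * b = u * a and
  u * g = u says u * d * a = u * d.\<close>
lemma right_modal_meet_exists:
  assumes modal: "right_modal F" and idem: "F \<subseteq> idems" and "a \<in> F" "b \<in> F"
  shows "\<exists>m\<in>idems. \<forall>u. u * m = u \<longleftrightarrow> u * a = u \<and> u * b = u"
proof -
  obtain d where "d \<in> F" and d: "\<And>u. u * a * b = u * a \<longleftrightarrow> u * d = u"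
    using modal \<open>b \<in> F\<close> unfolding right_modal_def by blast
  obtain g where "g \<in> F" and g: "\<And>u. u * d * a = u * d \<longleftrightarrow> u * g = u"
    using modal \<open>a \<in> F\<close> unfolding right_modal_def by blast
  have "d * d = d" "g * g = g"
    using \<open>d \<in> F\<close> \<open>g \<in> F\<close> idem unfolding idems_def by auto
  define m where "m = g * d"
  have md: "m * d = m"
    unfolding m_def using \<open>d * d = d\<close> by (simp add: mult.assoc)
  have ma: "m * a = m"
    using g[of g] \<open>g * g = g\<close> md unfolding m_def by (simp add: mult.assoc)
  have mb: "m * b = m"
    using d[of m] md ma by simp
  have meet: "u * m = u \<longleftrightarrow> u * a = u \<and> u * b = u" for u
  proof
    assume "u * m = u"
    then show "u * a = u \<and> u * b = u"
      using ma mb by (metis mult.assoc)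
  next
    assume ab: "u * a = u \<and> u * b = u"
    then have "u * d = u" using d[of u] by simp
    moreover have "u * g = u" using g[of u] ab \<open>u * d = u\<close> by simp
    ultimately show "u * m = u" unfolding m_def by (simp add: mult.assoc[symmetric])
  qed
  then have "m \<in> idems"
    using ma mb unfolding idems_def by blast
  with meet show ?thesis by blast
qed

definition meet_closure :: "'a::monoid_mult set \<Rightarrow> 'a set" where
  "meet_closure F =
     {m \<in> idems. \<exists>a\<in>F. \<exists>b\<in>F. \<forall>u. u * m = u \<longleftrightarrow> u * a = u \<and> u * b = u}"

lemma subset_meet_closure: "F \<subseteq> idems \<Longrightarrow> F \<subseteq> meet_closure F"
  unfolding meet_closure_def by blast

lemma protomodal_meet_closure:
  assumes "protomodal F"
  shows "protomodal (meet_closure F)"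
proof -
  have modal: "right_modal F" and idem: "F \<subseteq> idems" and "1 \<in> F"
    using assms unfolding protomodal_iff_right_modal by auto
  have "right_modal (meet_closure F)"
    unfolding right_modal_def
  proof (intro allI ballI)
    fix t p assume "p \<in> meet_closure F"
    then obtain a b where "a \<in> F" "b \<in> F" and p: "\<And>u. u * p = u \<longleftrightarrow> u * a = u \<and> u * b = u"
      unfolding meet_closure_def by blast
    obtain a' where "a' \<in> F" and a': "\<And>s. s * t * a = s * t \<longleftrightarrow> s * a' = s"
      using modal \<open>a \<in> F\<close> unfolding right_modal_def by blast
    obtain b' where "b' \<in> F" and b': "\<And>s. s * t * b = s * t \<longleftrightarrow> s * b' = s"
      using modal \<open>b \<in> F\<close> unfolding right_modal_def by blast
    obtain m where "m \<in> idems" and m: "\<And>u. u * m = u \<longleftrightarrow> u * a' = u \<and> u * b' = u"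
      using right_modal_meet_exists[OF modal idem \<open>a' \<in> F\<close> \<open>b' \<in> F\<close>] by blast
    have "m \<in> meet_closure F"
      unfolding meet_closure_def using \<open>m \<in> idems\<close> \<open>a' \<in> F\<close> \<open>b' \<in> F\<close> m by blast
    moreover have "s * t * p = s * t \<longleftrightarrow> s * m = s" for s
      using p[of "s * t"] a'[of s] b'[of s] m[of s] by blast
    ultimately show "\<exists>d\<in>meet_closure F. \<forall>s. s * t * p = s * t \<longleftrightarrow> s * d = s"
      by blast
  qed
  moreover have "meet_closure F \<subseteq> idems"
    unfolding meet_closure_def by blast
  ultimately show ?thesis
    using subset_meet_closure[OF idem] \<open>1 \<in> F\<close> unfolding protomodal_iff_right_modal by blast
qed

lemma sim_r_sym: "sim_r e f \<Longrightarrow> sim_r f e"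
  unfolding sim_r_def by blast

lemma le_r_trans: "le_r e f \<Longrightarrow> le_r f g \<Longrightarrow> le_r e g"
  unfolding le_r_def by (metis mult.assoc)

lemma sim_r_trans: "sim_r e f \<Longrightarrow> sim_r f g \<Longrightarrow> sim_r e g"
  unfolding sim_r_def using le_r_trans by blast

lemma sim_r_right_stable: "sim_r e f \<Longrightarrow> u * e = u \<longleftrightarrow> u * f = u"
  unfolding sim_r_def le_r_def by (metis mult.assoc)

lemma sim_r_one: "sim_r 1 e \<Longrightarrow> e = 1"
  unfolding sim_r_def le_r_def by simp

lemma right_modal_transversal:
  assumes "right_modal G" and "E \<subseteq> G" and cover: "\<forall>f\<in>G. \<exists>e\<in>E. sim_r f e"
  shows "right_modal E"
  unfolding right_modal_def
proof (intro allI ballI)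
  fix t e assume "e \<in> E"
  then obtain f where "f \<in> G" and f: "\<forall>s. s * t * e = s * t \<longleftrightarrow> s * f = s"
    using assms(1,2) unfolding right_modal_def by blast
  then obtain d where "d \<in> E" "sim_r f d"
    using cover by blast
  then show "\<exists>d\<in>E. \<forall>s. s * t * e = s * t \<longleftrightarrow> s * d = s"
    using f sim_r_right_stable by blast
qed

lemma modal_left_transversal:
  assumes "protomodal G" "E \<subseteq> G" "right_pre_reduced E" and cover: "\<forall>f\<in>G. \<exists>e\<in>E. sim_r f e"
  shows "modal_left E"
proof -
  have "1 \<in> G" using assms(1) unfolding protomodal_def by simp
  then obtain e where "e \<in> E" "sim_r 1 e" using cover by blast
  then have "1 \<in> E" using sim_r_one by blast
  moreover have "right_modal E"
    using right_modal_transversal assms unfolding protomodal_iff_right_modal by blast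
  ultimately show ?thesis
    using assms(3) unfolding modal_left_iff_protomodal protomodal_iff_right_modal right_pre_reduced_def
    by simp
qed

lemma inductive_left_if_meets:
  assumes "modal_left E"
    and meets: "\<And>e f. e \<in> E \<Longrightarrow> f \<in> E \<Longrightarrow>
      \<exists>m\<in>E. \<forall>u. u * m = u \<longleftrightarrow> u * e = u \<and> u * f = u"
  shows "inductive_left E"
proof -
  define meet where
    "meet e f = (SOME m. m \<in> E \<and> (\<forall>u. u * m = u \<longleftrightarrow> u * e = u \<and> u * f = u))" for e f
  have meet: "meet e f \<in> E" "\<And>u. u * meet e f = u \<longleftrightarrow> u * e = u \<and> u * f = u"
    if "e \<in> E" "f \<in> E" for e f
    using someI_ex[OF meets[OF that, unfolded Bex_def]] unfolding meet_def by blast+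
  have "le_r (meet e f) e \<and> le_r (meet e f) f" if "e \<in> E" "f \<in> E" for e f
  proof -
    have "meet e f * meet e f = meet e f"
      using meet(1)[OF that] assms(1) unfolding modal_left_def idems_def by blast
    then show ?thesis
      using meet(2)[OF that, of "meet e f"] unfolding le_r_def by simp
  qed
  moreover have "le_r g (meet e f)" if "e \<in> E" "f \<in> E" "le_r g e" "le_r g f" for e f g
    using meet(2)[OF that(1,2), of g] that(3,4) unfolding le_r_def by simp
  ultimately show ?thesis
    using assms(1) meet unfolding inductive_left_def
    by (intro conjI exI[of _ meet] ballI allI impI) auto
qed

lemma embedding_into_transversal:
  assumes "right_pre_reduced E" "E \<subseteq> G" and cover: "\<forall>f\<in>G. \<exists>e\<in>E'. sim_r f e"
  shows "\<exists>\<phi>. inj_on \<phi> E \<and> \<phi> ` E \<subseteq> E' \<and> (\<forall>e\<in>E. sim_r e (\<phi> e))"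
proof -
  define \<phi> where "\<phi> e = (SOME e'. e' \<in> E' \<and> sim_r e e')" for e
  have \<phi>: "\<phi> e \<in> E' \<and> sim_r e (\<phi> e)" if "e \<in> E" for e
    using someI_ex[of "\<lambda>e'. e' \<in> E' \<and> sim_r e e'"] cover \<open>E \<subseteq> G\<close> that
    unfolding \<phi>_def by blast
  have "inj_on \<phi> E"
  proof (rule inj_onI)
    fix x y assume "x \<in> E" "y \<in> E" "\<phi> x = \<phi> y"
    then have "sim_r x y"
      using \<phi> sim_r_sym sim_r_trans by metis
    then show "x = y"
      using assms(1) \<open>x \<in> E\<close> \<open>y \<in> E\<close> unfolding right_pre_reduced_def sim_r_def le_r_def by blast
  qed
  with \<phi> show ?thesis by blast
qed

lemma transversal_has_meets:
  assumes "protomodal G" and "meet_closure G \<subseteq> G" and "E \<subseteq> G"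
    and cover: "\<forall>f\<in>G. \<exists>e\<in>E. sim_r f e" and "e \<in> E" "f \<in> E"
  shows "\<exists>m\<in>E. \<forall>u. u * m = u \<longleftrightarrow> u * e = u \<and> u * f = u"
proof -
  have "right_modal G" "G \<subseteq> idems"
    using assms(1) unfolding protomodal_iff_right_modal by auto
  moreover have "e \<in> G" "f \<in> G"
    using assms(3,5,6) by auto
  ultimately obtain m where "m \<in> idems" and m: "\<forall>u. u * m = u \<longleftrightarrow> u * e = u \<and> u * f = u"
    using right_modal_meet_exists by metis
  then have "m \<in> meet_closure G"
    unfolding meet_closure_def using \<open>e \<in> G\<close> \<open>f \<in> G\<close> by blast
  then have "m \<in> G"
    using assms(2) by blast
  then obtain d where "d \<in> E" "sim_r m d"
    using cover by blast
  then show ?thesis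
    using m sim_r_right_stable by blast
qed

lemma protomodal_one: "protomodal {1}"
  unfolding protomodal_def idems_def Eq_def by auto

theorem proposition5p14:
  fixes G :: "'a::monoid_mult set"
  assumes G_def: "G = \<Union>{E. 1 \<in> E \<and> E \<subseteq> idems \<and> protomodal E}"
  shows "protomodal G
    \<and> (\<forall>H. 1 \<in> H \<and> H \<subseteq> idems \<and> protomodal H \<longrightarrow> H \<subseteq> G)
    \<and> (\<forall>E'. max_right_pre_reduced_in E' G \<longrightarrow>
          modal_left E'
        \<and> (\<forall>E. modal_left E \<longrightarrow>
              (\<exists>\<phi>. inj_on \<phi> E \<and> \<phi> ` E \<subseteq> E' \<and> (\<forall>e\<in>E. sim_r e (\<phi> e))))
        \<and> inductive_left E')"
proof -
  have largest: "H \<subseteq> G" if "protomodal H" for H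
    using that unfolding G_def protomodal_def by blast
  have "{1} \<in> {E. 1 \<in> E \<and> E \<subseteq> idems \<and> protomodal E}"
    using protomodal_one unfolding protomodal_def by blast
  then have "protomodal G"
    unfolding G_def by (intro protomodal_Union) auto
  have meet_closed: "meet_closure G \<subseteq> G"
    using largest protomodal_meet_closure[OF \<open>protomodal G\<close>] .
  have "modal_left E' \<and> (\<forall>E. modal_left E \<longrightarrow>
          (\<exists>\<phi>. inj_on \<phi> E \<and> \<phi> ` E \<subseteq> E' \<and> (\<forall>e\<in>E. sim_r e (\<phi> e)))) \<and> inductive_left E'"
    if "max_right_pre_reduced_in E' G" for E'
  proof -
    have "E' \<subseteq> G" "right_pre_reduced E'" and cover: "\<forall>f\<in>G. \<exists>e\<in>E'. sim_r f e"
      using that unfolding max_right_pre_reduced_in_def by auto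
    then have "modal_left E'"
      using modal_left_transversal \<open>protomodal G\<close> by blast
    moreover have "inductive_left E'"
      by (rule inductive_left_if_meets[OF \<open>modal_left E'\<close>])
        (rule transversal_has_meets[OF \<open>protomodal G\<close> meet_closed \<open>E' \<subseteq> G\<close> cover])
    moreover have "\<exists>\<phi>. inj_on \<phi> E \<and> \<phi> ` E \<subseteq> E' \<and> (\<forall>e\<in>E. sim_r e (\<phi> e))"
      if "modal_left E" for E
      using that embedding_into_transversal[OF _ largest cover]
      unfolding modal_left_iff_protomodal by blast
    ultimately show ?thesis by blast
  qed
  then show ?thesis
    using \<open>protomodal G\<close> largest by blast
qed

end
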